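(* For a large scale group $G$ the following are equivalent: (1) the large scale structure of $G$ is induced by a metric; (2) the bornology of $G$ has a countable basis; (3) there is a left-invariant metric $d$ on $G$ inducing the large scale structure of $G$.
   Context: A bornology on a set is a cover closed under subsets and finite unions; a basis of a bornology $\mathcal B$ is a subfamily such that every member of $\mathcal B$ is contained in a member of the subfamily. A large scale group is a group $G$ with a bornology $\mathcal B$ closed under inverses and products; its uniformly bounded covers are those refining $\{gB\}_{g\in G}$ for some $B\in\mathcal B$. A metric $d$ induces the large scale structure whose uniformly bounded covers are those covers refining, for some $r>0$, the family of all sets of $d$-diameter at most $r$. $d$ is left-invariant if $d(gx,gy)=d(x,y)$ for all $g,x,y\in G$. *)

theory Defs
  imports "HOL-Algebra.Coset" "HOL-Analysis.Abstract_Metric_Spaces"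
begin

definition bornology :: "'a set \<Rightarrow> 'a set set \<Rightarrow> bool" where
  "bornology X \<B> \<longleftrightarrow>
     \<B> \<subseteq> Pow X \<and> \<Union>\<B> = X \<and>
     (\<forall>A\<in>\<B>. \<forall>C. C \<subseteq> A \<longrightarrow> C \<in> \<B>) \<and>
     (\<forall>A\<in>\<B>. \<forall>C\<in>\<B>. A \<union> C \<in> \<B>)"

definition bornology_basis :: "'a set set \<Rightarrow> 'a set set \<Rightarrow> bool" where
  "bornology_basis \<B> \<C> \<longleftrightarrow> \<C> \<subseteq> \<B> \<and> (\<forall>A\<in>\<B>. \<exists>C\<in>\<C>. A \<subseteq> C)"

definition large_scale_group :: "('a, 'b) monoid_scheme \<Rightarrow> 'a set set \<Rightarrow> bool" where
  "large_scale_group G \<B> \<longleftrightarrow>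
     group G \<and> bornology (carrier G) \<B> \<and>
     (\<forall>A\<in>\<B>. set_inv\<^bsub>G\<^esub> A \<in> \<B>) \<and>
     (\<forall>A\<in>\<B>. \<forall>C\<in>\<B>. A <#>\<^bsub>G\<^esub> C \<in> \<B>)"

definition is_cover :: "'a set \<Rightarrow> 'a set set \<Rightarrow> bool" where
  "is_cover X \<U> \<longleftrightarrow> \<U> \<subseteq> Pow X \<and> \<Union>\<U> = X"

definition refines :: "'a set set \<Rightarrow> 'a set set \<Rightarrow> bool" where
  "refines \<U> \<V> \<longleftrightarrow> (\<forall>U\<in>\<U>. \<exists>V\<in>\<V>. U \<subseteq> V)"

definition group_ub_covers :: "('a, 'b) monoid_scheme \<Rightarrow> 'a set set \<Rightarrow> 'a set set set" where
  "group_ub_covers G \<B> =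
     {\<U>. is_cover (carrier G) \<U> \<and>
          (\<exists>B\<in>\<B>. refines \<U> ((\<lambda>g. g <#\<^bsub>G\<^esub> B) ` carrier G))}"

definition diam_le :: "'a set \<Rightarrow> ('a \<Rightarrow> 'a \<Rightarrow> real) \<Rightarrow> real \<Rightarrow> 'a set set" where
  "diam_le X d r = {A. A \<subseteq> X \<and> (\<forall>x\<in>A. \<forall>y\<in>A. d x y \<le> r)}"

definition metric_ub_covers :: "'a set \<Rightarrow> ('a \<Rightarrow> 'a \<Rightarrow> real) \<Rightarrow> 'a set set set" where
  "metric_ub_covers X d =
     {\<U>. is_cover X \<U> \<and> (\<exists>r>0. refines \<U> (diam_le X d r))}"

definition left_invariant :: "('a, 'b) monoid_scheme \<Rightarrow> ('a \<Rightarrow> 'a \<Rightarrow> real) \<Rightarrow> bool" where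
  "left_invariant G d \<longleftrightarrow>
     (\<forall>g\<in>carrier G. \<forall>x\<in>carrier G. \<forall>y\<in>carrier G. d (g \<otimes>\<^bsub>G\<^esub> x) (g \<otimes>\<^bsub>G\<^esub> y) = d x y)"

end

theory Submission
  imports Defs
begin

text \<open>If a metric induces the large scale structure, the bornology is exactly the family of
  metrically bounded sets (a set belongs to it iff its left translates form a uniformly bounded
  cover), so the balls of integer radius around the identity form a countable basis.
  Conversely, for a left-invariant metric whose bounded sets are the bornology, the translates
  \<open>g B\<close> of a bounded set have uniformly bounded diameter and a set of diameter at most \<open>r\<close>
  containing \<open>x\<close> lies in \<open>x B(1, r)\<close>, so the two families of uniformly bounded covers agree.
  Such a metric comes from a countable basis \<open>c\<^sub>0, c\<^sub>1, \<dots>\<close>: the sets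
  \<open>K\<^sub>0 = {1}\<close>, \<open>K\<^sub>n\<^sub>+\<^sub>1 = K\<^sub>n K\<^sub>n \<union> c\<^sub>n\<close> exhaust the bornology, the level
  \<open>|g| = min {n. g \<in> K\<^sub>n}\<close> is subadditive, and
  \<open>d(x, y) = max |x\<^sup>-\<^sup>1 y| |y\<^sup>-\<^sup>1 x|\<close> is a left-invariant metric whose bounded sets
  are exactly the members of the bornology.\<close>

lemma large_scale_groupD:
  assumes "large_scale_group G \<B>"
  shows "group G" "\<B> \<subseteq> Pow (carrier G)" "\<Union>\<B> = carrier G"
    "\<And>A C. A \<in> \<B> \<Longrightarrow> C \<subseteq> A \<Longrightarrow> C \<in> \<B>"
    "\<And>A C. A \<in> \<B> \<Longrightarrow> C \<in> \<B> \<Longrightarrow> A \<union> C \<in> \<B>"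
    "\<And>A. A \<in> \<B> \<Longrightarrow> set_inv\<^bsub>G\<^esub> A \<in> \<B>"
    "\<And>A C. A \<in> \<B> \<Longrightarrow> C \<in> \<B> \<Longrightarrow> A <#>\<^bsub>G\<^esub> C \<in> \<B>"
  using assms unfolding large_scale_group_def bornology_def by blast+

lemma large_scale_group_singleton:
  assumes "large_scale_group G \<B>" "g \<in> carrier G"
  shows "{g} \<in> \<B>"
proof -
  obtain A where "A \<in> \<B>" "g \<in> A"
    using large_scale_groupD(3)[OF assms(1)] assms(2) by blast
  then show ?thesis using large_scale_groupD(4)[OF assms(1)] by blast
qed

lemma large_scale_group_l_coset:
  assumes "large_scale_group G \<B>" "g \<in> carrier G" "A \<in> \<B>"
  shows "g <#\<^bsub>G\<^esub> A \<in> \<B>"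
  using large_scale_groupD(7)[OF assms(1) large_scale_group_singleton[OF assms(1,2)] assms(3)]
  by (simp add: l_coset_eq_set_mult)

lemma refines_subset: "\<U> \<subseteq> \<V> \<Longrightarrow> refines \<U> \<V>"
  unfolding refines_def by blast

lemma refines_trans: "refines \<U> \<V> \<Longrightarrow> refines \<V> \<W> \<Longrightarrow> refines \<U> \<W>"
  unfolding refines_def by (meson order_trans)

lemma (in group) inv_mult_cancel_left:
  "g \<in> carrier G \<Longrightarrow> x \<in> carrier G \<Longrightarrow> y \<in> carrier G \<Longrightarrow> inv (g \<otimes> x) \<otimes> (g \<otimes> y) = inv x \<otimes> y"
  by (simp add: inv_mult_group m_assoc[symmetric]) (simp add: m_assoc)

lemma (in group) is_cover_l_cosets:
  assumes A: "A \<subseteq> carrier G" and a: "a \<in> A"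
  shows "is_cover (carrier G) ((\<lambda>g. g <# A) ` carrier G)"
proof -
  have "y \<in> (y \<otimes> inv a) <# A" if y: "y \<in> carrier G" for y
  proof -
    have "y = (y \<otimes> inv a) \<otimes> a" using y a A by (simp add: m_assoc subsetD)
    then show ?thesis unfolding l_coset_def using a by blast
  qed
  moreover have "y \<otimes> inv a \<in> carrier G" if "y \<in> carrier G" for y
    using that a A by blast
  moreover have "g <# A \<subseteq> carrier G" if "g \<in> carrier G" for g
    using l_coset_subset_G[OF A that] .
  ultimately show ?thesis unfolding is_cover_def by blast
qed

lemma l_cosets_in_group_ub_covers:
  assumes "large_scale_group G \<B>" "A \<in> \<B>" "a \<in> A"
  shows "(\<lambda>g. g <#\<^bsub>G\<^esub> A) ` carrier G \<in> group_ub_covers G \<B>"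
proof -
  interpret group G using large_scale_groupD(1)[OF assms(1)] .
  have "A \<subseteq> carrier G" using large_scale_groupD(2)[OF assms(1)] assms(2) by blast
  then show ?thesis
    unfolding group_ub_covers_def refines_def using is_cover_l_cosets assms(2,3) by blast
qed

lemma diam_le_in_metric_ub_covers:
  assumes "Metric_space X d" "r > 0"
  shows "diam_le X d r \<in> metric_ub_covers X d"
proof -
  have "{x} \<in> diam_le X d r" if "x \<in> X" for x
    using that assms Metric_space.mdist_zero[OF assms(1)] unfolding diam_le_def by auto
  then have "is_cover X (diam_le X d r)"
    unfolding is_cover_def diam_le_def by blast
  then show ?thesis
    unfolding metric_ub_covers_def refines_def using assms(2) by blast
qed

lemma (in Metric_space) mbounded_iff_diam_le: "mbounded S \<longleftrightarrow> (\<exists>r>0. S \<in> diam_le M d r)"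
  unfolding mbounded_alt_pos diam_le_def by blast

lemma (in Metric_space) mbounded_subset_mcball_nat:
  assumes "mbounded S" "x \<in> M"
  shows "\<exists>n::nat. S \<subseteq> mcball x (real n)"
proof -
  obtain y B where S: "S \<subseteq> mcball y B" using assms(1) mbounded_def by blast
  show ?thesis
  proof (cases "y \<in> M")
    case True
    obtain n :: nat where "d x y + B \<le> real n" using real_arch_simple by blast
    then have "mcball y B \<subseteq> mcball x (real n)"
      using mcball_subset[of y x B] assms(2) True commute by simp
    then show ?thesis using S by blast
  next
    case False
    then have "S = {}" using S by auto
    then show ?thesis by simp
  qed
qed

lemma (in Metric_space) bornology_basis_mcball:
  "x \<in> M \<Longrightarrow> bornology_basis (Collect mbounded) (range (\<lambda>n. mcball x (real n)))"
  unfolding bornology_basis_def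
  by (intro conjI ballI; use mbounded_mcball mbounded_subset_mcball_nat in fastforce)

lemma bornology_eq_mbounded_if_ub_covers_eq:
  fixes G (structure)
  assumes "large_scale_group G \<B>" and "Metric_space (carrier G) d"
    and "group_ub_covers G \<B> = metric_ub_covers (carrier G) d"
  shows "\<B> = Collect (Metric_space.mbounded (carrier G) d)"
proof (intro equalityI subsetI CollectI)
  interpret group G using large_scale_groupD(1)[OF assms(1)] .
  interpret Metric_space "carrier G" d by fact
  fix A assume A: "A \<in> \<B>"
  show "mbounded A"
  proof (cases "A = {}")
    case False
    then obtain a where a: "a \<in> A" by blast
    have "(\<lambda>g. g <# A) ` carrier G \<in> metric_ub_covers (carrier G) d"
      using l_cosets_in_group_ub_covers[OF assms(1) A a] assms(3) by simp
    then obtain r where r: "r > 0" "refines ((\<lambda>g. g <# A) ` carrier G) (diam_le (carrier G) d r)"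
      unfolding metric_ub_covers_def by blast
    have "A = \<one> <# A" using A large_scale_groupD(2)[OF assms(1)] lcos_mult_one by blast
    then have "A \<in> (\<lambda>g. g <# A) ` carrier G" by blast
    then have "A \<in> diam_le (carrier G) d r"
      using r(2) unfolding refines_def diam_le_def by blast
    then show ?thesis using r(1) mbounded_iff_diam_le by blast
  qed simp
next
  interpret Metric_space "carrier G" d by fact
  fix A assume "A \<in> Collect mbounded"
  then obtain r where r: "r > 0" "A \<in> diam_le (carrier G) d r"
    using mbounded_iff_diam_le by blast
  have "diam_le (carrier G) d r \<in> group_ub_covers G \<B>"
    using diam_le_in_metric_ub_covers[OF assms(2) r(1)] assms(3) by simp
  then obtain B0 g where "B0 \<in> \<B>" "g \<in> carrier G" "A \<subseteq> g <#\<^bsub>G\<^esub> B0"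
    using r(2) unfolding group_ub_covers_def refines_def by blast
  then show "A \<in> \<B>"
    using large_scale_group_l_coset[OF assms(1)] large_scale_groupD(4)[OF assms(1)] by blast
qed

lemma (in group) l_coset_in_diam_le:
  assumes "left_invariant G d" "g \<in> carrier G" "A \<in> diam_le (carrier G) d r"
  shows "g <# A \<in> diam_le (carrier G) d r"
proof -
  have A: "A \<subseteq> carrier G" "\<forall>x\<in>A. \<forall>y\<in>A. d x y \<le> r"
    using assms(3) unfolding diam_le_def by blast+
  have "d (g \<otimes> x) (g \<otimes> y) \<le> r" if "x \<in> A" "y \<in> A" for x y
    using assms(1,2) A that unfolding left_invariant_def by (metis subsetD)
  then show ?thesis
    using l_coset_subset_G[OF A(1) assms(2)] unfolding diam_le_def l_coset_def by blast
qed

lemma (in group) diam_le_refines_l_cosets_mcball: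
  assumes "Metric_space (carrier G) d" "left_invariant G d"
  shows "refines (diam_le (carrier G) d r) ((\<lambda>x. x <# Metric_space.mcball (carrier G) d \<one> r) ` carrier G)"
  unfolding refines_def
proof
  interpret Metric_space "carrier G" d by fact
  fix D assume "D \<in> diam_le (carrier G) d r"
  then have D: "D \<subseteq> carrier G" "\<forall>x\<in>D. \<forall>y\<in>D. d x y \<le> r"
    unfolding diam_le_def by blast+
  show "\<exists>V\<in>(\<lambda>x. x <# mcball \<one> r) ` carrier G. D \<subseteq> V"
  proof (cases "D = {}")
    case False
    then obtain x where x: "x \<in> D" by blast
    have "y \<in> x <# mcball \<one> r" if y: "y \<in> D" for y
    proof -
      have xy: "x \<in> carrier G" "y \<in> carrier G" using x y D(1) by blast+
      have "d \<one> (inv x \<otimes> y) = d x y"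
        using assms(2) xy unfolding left_invariant_def by (metis inv_closed l_inv)
      then have "inv x \<otimes> y \<in> mcball \<one> r" using D(2) x y xy by simp
      moreover have "y = x \<otimes> (inv x \<otimes> y)" using xy by (simp add: m_assoc[symmetric])
      ultimately show ?thesis unfolding l_coset_def by blast
    qed
    then show ?thesis using x D(1) by blast
  qed blast
qed

lemma ub_covers_eq_if_left_invariant:
  fixes G (structure)
  assumes "group G" "Metric_space (carrier G) d" "left_invariant G d"
    and \<B>: "\<B> = Collect (Metric_space.mbounded (carrier G) d)"
  shows "group_ub_covers G \<B> = metric_ub_covers (carrier G) d"
proof (intro equalityI subsetI)
  interpret group G by fact
  interpret Metric_space "carrier G" d by fact
  fix \<U>
  assume "\<U> \<in> group_ub_covers G \<B>"
  then obtain B0 where \<U>: "is_cover (carrier G) \<U>" "B0 \<in> \<B>"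
    "refines \<U> ((\<lambda>g. g <# B0) ` carrier G)"
    unfolding group_ub_covers_def by blast
  obtain r where r: "r > 0" "B0 \<in> diam_le (carrier G) d r"
    using \<U>(2) \<B> mbounded_iff_diam_le by blast
  have "refines ((\<lambda>g. g <# B0) ` carrier G) (diam_le (carrier G) d r)"
    using l_coset_in_diam_le[OF assms(3) _ r(2)] by (intro refines_subset image_subsetI)
  then have "refines \<U> (diam_le (carrier G) d r)"
    using \<U>(3) by (rule refines_trans[rotated])
  then show "\<U> \<in> metric_ub_covers (carrier G) d"
    unfolding metric_ub_covers_def using \<U>(1) r(1) by blast
next
  interpret group G by fact
  interpret Metric_space "carrier G" d by fact
  fix \<U>
  assume "\<U> \<in> metric_ub_covers (carrier G) d"
  then obtain r where \<U>: "is_cover (carrier G) \<U>" "refines \<U> (diam_le (carrier G) d r)"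
    unfolding metric_ub_covers_def by blast
  have "refines \<U> ((\<lambda>x. x <# mcball \<one> r) ` carrier G)"
    using \<U>(2) diam_le_refines_l_cosets_mcball[OF assms(2,3)] by (rule refines_trans)
  moreover have "mcball \<one> r \<in> \<B>" using \<B> mbounded_mcball by blast
  ultimately show "\<U> \<in> group_ub_covers G \<B>"
    unfolding group_ub_covers_def using \<U>(1) by blast
qed

locale group_filtration = group G for G (structure) +
  fixes K :: "nat \<Rightarrow> 'a set"
  assumes filtration_0: "K 0 = {\<one>}"
    and filtration_subset: "K n \<subseteq> carrier G"
    and filtration_mult: "K n <#> K n \<subseteq> K (Suc n)"
    and filtration_exhausts: "g \<in> carrier G \<Longrightarrow> \<exists>n. g \<in> K n"
begin

lemma filtration_mult_mem: "x \<in> K n \<Longrightarrow> y \<in> K n \<Longrightarrow> x \<otimes> y \<in> K (Suc n)"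
  using filtration_mult unfolding set_mult_def by blast

lemma one_in_filtration: "\<one> \<in> K n"
proof (induction n)
  case 0
  then show ?case using filtration_0 by simp
next
  case (Suc n)
  then show ?case using filtration_mult_mem[of \<one> n \<one>] by simp
qed

lemma filtration_mono: "m \<le> n \<Longrightarrow> K m \<subseteq> K n"
proof (rule lift_Suc_mono_le[of K])
  fix n
  show "K n \<subseteq> K (Suc n)"
  proof
    fix x assume x: "x \<in> K n"
    have "x \<otimes> \<one> \<in> K (Suc n)" using filtration_mult_mem[OF x one_in_filtration] .
    then show "x \<in> K (Suc n)" using x filtration_subset by (metis r_one subsetD)
  qed
qed

definition level :: "'a \<Rightarrow> nat" where
  "level g = (LEAST n. g \<in> K n)"

lemma level_mem: "g \<in> carrier G \<Longrightarrow> g \<in> K (level g)"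
  unfolding level_def using filtration_exhausts by (rule LeastI_ex)

lemma level_le: "g \<in> K n \<Longrightarrow> level g \<le> n"
  unfolding level_def by (rule Least_le)

lemma level_eq_0_iff: "g \<in> carrier G \<Longrightarrow> level g = 0 \<longleftrightarrow> g = \<one>"
  using level_mem level_le[of g 0] filtration_0 by fastforce

lemma level_mult_le:
  assumes x: "x \<in> carrier G" and y: "y \<in> carrier G"
  shows "level (x \<otimes> y) \<le> level x + level y"
proof (cases "level x = 0 \<or> level y = 0")
  case True
  then show ?thesis using level_eq_0_iff x y by auto
next
  case False
  define m where "m = max (level x) (level y)"
  have "x \<in> K m" "y \<in> K m"
    using filtration_mono level_mem x y unfolding m_def by (metis max.cobounded1 max.cobounded2 subsetD)+
  then have "level (x \<otimes> y) \<le> Suc m" by (intro level_le filtration_mult_mem)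
  then show ?thesis using False unfolding m_def by auto
qed

text \<open>The maximum makes the distance symmetric without asking the \<open>K n\<close> to be closed under inverses.\<close>

definition level_dist :: "'a \<Rightarrow> 'a \<Rightarrow> real" where
  "level_dist x y = real (max (level (inv x \<otimes> y)) (level (inv y \<otimes> x)))"

lemma Metric_space_level_dist: "Metric_space (carrier G) level_dist"
proof
  fix x y
  show "0 \<le> level_dist x y" unfolding level_dist_def by simp
  show "level_dist x y = level_dist y x" unfolding level_dist_def by (simp add: max.commute)
next
  fix x y assume x: "x \<in> carrier G" and y: "y \<in> carrier G"
  have "inv x \<otimes> y = \<one> \<longleftrightarrow> x = y" "inv y \<otimes> x = \<one> \<longleftrightarrow> x = y"
    using x y by (metis inv_closed inv_equality l_inv r_inv inv_inv)+
  then show "level_dist x y = 0 \<longleftrightarrow> x = y"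
    unfolding level_dist_def using level_eq_0_iff x y by simp
next
  fix x y z assume x: "x \<in> carrier G" and y: "y \<in> carrier G" and z: "z \<in> carrier G"
  have split: "inv u \<otimes> w = (inv u \<otimes> v) \<otimes> (inv v \<otimes> w)"
    if "u \<in> carrier G" "v \<in> carrier G" "w \<in> carrier G" for u v w
    using that by (simp add: m_assoc) (simp add: m_assoc[symmetric])
  have "level (inv x \<otimes> z) \<le> level (inv x \<otimes> y) + level (inv y \<otimes> z)"
    "level (inv z \<otimes> x) \<le> level (inv z \<otimes> y) + level (inv y \<otimes> x)"
    using split level_mult_le x y z by (metis inv_closed m_closed)+
  then show "level_dist x z \<le> level_dist x y + level_dist y z"
    unfolding level_dist_def by simp
qed

lemma left_invariant_level_dist: "left_invariant G level_dist"
  unfolding left_invariant_def level_dist_def by (simp add: inv_mult_cancel_left)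

lemma level_dist_one_le:
  assumes "g \<in> K n" "inv g \<in> K n"
  shows "level_dist \<one> g \<le> real n"
proof -
  have "g \<in> carrier G" "inv g \<in> carrier G" using assms filtration_subset by blast+
  then show ?thesis unfolding level_dist_def using assms by (simp add: level_le)
qed

lemma mcball_level_dist_subset_l_coset:
  assumes x: "x \<in> carrier G" and "r \<le> real n"
  shows "Metric_space.mcball (carrier G) level_dist x r \<subseteq> x <# K n"
proof
  fix y assume "y \<in> Metric_space.mcball (carrier G) level_dist x r"
  then have y: "y \<in> carrier G" and "level_dist x y \<le> r"
    using Metric_space.in_mcball[OF Metric_space_level_dist] by auto
  then have "level (inv x \<otimes> y) \<le> n" using assms(2) unfolding level_dist_def by simp
  then have "inv x \<otimes> y \<in> K n" using filtration_mono level_mem x y by (meson inv_closed m_closed subsetD)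
  moreover have "y = x \<otimes> (inv x \<otimes> y)" using x y by (simp add: m_assoc[symmetric])
  ultimately show "y \<in> x <# K n" unfolding l_coset_def by blast
qed

lemma bornology_eq_mbounded_level_dist:
  assumes LS: "large_scale_group G \<B>"
    and K_in: "\<And>n. K n \<in> \<B>" and K_exhausts: "\<And>A. A \<in> \<B> \<Longrightarrow> \<exists>n. A \<subseteq> K n"
  shows "\<B> = Collect (Metric_space.mbounded (carrier G) level_dist)"
proof (intro equalityI subsetI CollectI)
  interpret Metric_space "carrier G" level_dist by (rule Metric_space_level_dist)
  fix A assume "A \<in> Collect mbounded"
  then obtain x r where A: "A \<subseteq> mcball x r" using mbounded_def by blast
  show "A \<in> \<B>"
  proof (cases "x \<in> carrier G")
    case True
    obtain n :: nat where "r \<le> real n" using real_arch_simple by blast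
    then have "A \<subseteq> x <# K n" using A mcball_level_dist_subset_l_coset[OF True] by blast
    then show ?thesis
      using large_scale_group_l_coset[OF LS True K_in] large_scale_groupD(4)[OF LS] by blast
  next
    case False
    then have "A \<subseteq> K 0" using A by auto
    then show ?thesis using K_in large_scale_groupD(4)[OF LS] by blast
  qed
next
  interpret Metric_space "carrier G" level_dist by (rule Metric_space_level_dist)
  fix A assume A: "A \<in> \<B>"
  then have "A \<union> set_inv A \<in> \<B>" using large_scale_groupD(5,6)[OF LS] by blast
  then obtain n where n: "A \<union> set_inv A \<subseteq> K n" using K_exhausts by blast
  have "A \<subseteq> mcball \<one> (real n)"
  proof
    fix g assume "g \<in> A"
    moreover have "g \<in> K n" "inv g \<in> K n" using n \<open>g \<in> A\<close> unfolding SET_INV_def by blast+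
    ultimately show "g \<in> mcball \<one> (real n)"
      using level_dist_one_le filtration_subset by (auto simp: subsetD)
  qed
  then show "mbounded A" using mbounded_mcball mbounded_subset by blast
qed

end

fun basis_filtration :: "('a, 'b) monoid_scheme \<Rightarrow> (nat \<Rightarrow> 'a set) \<Rightarrow> nat \<Rightarrow> 'a set" where
  "basis_filtration G c 0 = {\<one>\<^bsub>G\<^esub>}"
| "basis_filtration G c (Suc n) =
     (basis_filtration G c n <#>\<^bsub>G\<^esub> basis_filtration G c n) \<union> c n"

lemma basis_filtration_in_bornology:
  assumes "large_scale_group G \<B>" "\<And>n. c n \<in> \<B>"
  shows "basis_filtration G c n \<in> \<B>"
proof (induction n)
  case 0
  show ?case using large_scale_group_singleton[OF assms(1)] large_scale_groupD(1)[OF assms(1)]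
    by (simp add: group.is_monoid monoid.one_closed)
next
  case (Suc n)
  then show ?case using large_scale_groupD(5,7)[OF assms(1)] assms(2) by simp
qed

lemma group_filtration_basis_filtration:
  assumes LS: "large_scale_group G \<B>"
    and c: "\<And>n. c n \<in> \<B>" "\<And>A. A \<in> \<B> \<Longrightarrow> \<exists>n. A \<subseteq> c n"
  shows "group_filtration G (basis_filtration G c)"
  unfolding group_filtration_def group_filtration_axioms_def
proof (intro conjI allI impI)
  show "group G" using large_scale_groupD(1)[OF LS] .
  fix n
  show "basis_filtration G c n \<subseteq> carrier G"
    using basis_filtration_in_bornology[OF LS c(1), where n=n] large_scale_groupD(2)[OF LS] by (meson PowD subsetD)
  show "basis_filtration G c n <#>\<^bsub>G\<^esub> basis_filtration G c n \<subseteq> basis_filtration G c (Suc n)"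
    by simp
next
  fix g assume "g \<in> carrier G"
  then obtain n where "{g} \<subseteq> c n" using c(2) large_scale_group_singleton[OF LS] by blast
  then have "g \<in> basis_filtration G c (Suc n)" by simp
  then show "\<exists>n. g \<in> basis_filtration G c n" ..
qed simp

lemma bornology_basis_enumeration:
  assumes "countable \<C>" "bornology_basis \<B> \<C>" "\<B> \<noteq> {}"
  obtains c :: "nat \<Rightarrow> 'a set" where "\<And>n. c n \<in> \<B>" "\<And>A. A \<in> \<B> \<Longrightarrow> \<exists>n. A \<subseteq> c n"
proof -
  have \<C>: "\<C> \<subseteq> \<B>" "\<And>A. A \<in> \<B> \<Longrightarrow> \<exists>C\<in>\<C>. A \<subseteq> C"
    using assms(2) unfolding bornology_basis_def by blast+
  have "\<C> \<noteq> {}" using assms(3) \<C>(2) by fast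
  then have "from_nat_into \<C> n \<in> \<C>" for n by (rule from_nat_into)
  then have in_\<B>: "from_nat_into \<C> n \<in> \<B>" for n using \<C>(1) by blast
  have covers: "\<exists>n. A \<subseteq> from_nat_into \<C> n" if A: "A \<in> \<B>" for A
  proof -
    obtain C where "C \<in> \<C>" "A \<subseteq> C" using \<C>(2)[OF A] by blast
    moreover obtain n where "from_nat_into \<C> n = C"
      using from_nat_into_surj[OF assms(1) \<open>C \<in> \<C>\<close>] ..
    ultimately show ?thesis by blast
  qed
  show thesis using in_\<B> covers by (rule that)
qed

lemma countable_basis_if_metric:
  fixes G (structure)
  assumes "large_scale_group G \<B>" "Metric_space (carrier G) d"
    and "group_ub_covers G \<B> = metric_ub_covers (carrier G) d"
  shows "\<exists>\<C>. countable \<C> \<and> bornology_basis \<B> \<C>"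
proof -
  interpret group G using large_scale_groupD(1)[OF assms(1)] .
  interpret Metric_space "carrier G" d by fact
  have "bornology_basis \<B> (range (\<lambda>n. mcball \<one> (real n)))"
    using bornology_eq_mbounded_if_ub_covers_eq[OF assms] bornology_basis_mcball[OF one_closed]
    by simp
  moreover have "countable (range (\<lambda>n. mcball \<one> (real n)))" by simp
  ultimately show ?thesis by blast
qed

lemma left_invariant_metric_if_countable_basis:
  assumes LS: "large_scale_group G \<B>" and "countable \<C>" "bornology_basis \<B> \<C>"
  shows "\<exists>d. Metric_space (carrier G) d \<and> left_invariant G d \<and>
           group_ub_covers G \<B> = metric_ub_covers (carrier G) d"
proof -
  interpret group G using large_scale_groupD(1)[OF LS] .
  have "\<B> \<noteq> {}" using large_scale_group_singleton[OF LS one_closed] by blast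
  with assms(2,3) obtain c :: "nat \<Rightarrow> 'a set"
    where c: "\<And>n. c n \<in> \<B>" "\<And>A. A \<in> \<B> \<Longrightarrow> \<exists>n. A \<subseteq> c n"
    by (rule bornology_basis_enumeration) auto
  interpret group_filtration G "basis_filtration G c"
    using group_filtration_basis_filtration[OF LS c] .
  have "\<exists>n. A \<subseteq> basis_filtration G c n" if A: "A \<in> \<B>" for A
  proof -
    obtain n where "A \<subseteq> c n" using c(2)[OF A] ..
    then have "A \<subseteq> basis_filtration G c (Suc n)" by auto
    then show ?thesis ..
  qed
  with LS basis_filtration_in_bornology[OF LS c(1)]
  have "\<B> = Collect (Metric_space.mbounded (carrier G) level_dist)"
    by (rule bornology_eq_mbounded_level_dist)
  with is_group Metric_space_level_dist left_invariant_level_dist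
  have "group_ub_covers G \<B> = metric_ub_covers (carrier G) level_dist"
    by (rule ub_covers_eq_if_left_invariant)
  then show ?thesis using Metric_space_level_dist left_invariant_level_dist by blast
qed

theorem proposition7p1:
  fixes G :: "('a, 'b) monoid_scheme" and \<B> :: "'a set set"
  assumes "large_scale_group G \<B>"
  shows "((\<exists>d. Metric_space (carrier G) d \<and> group_ub_covers G \<B> = metric_ub_covers (carrier G) d)
           \<longleftrightarrow> (\<exists>\<C>. countable \<C> \<and> bornology_basis \<B> \<C>))
       \<and> ((\<exists>\<C>. countable \<C> \<and> bornology_basis \<B> \<C>)
           \<longleftrightarrow> (\<exists>d. Metric_space (carrier G) d \<and> left_invariant G d \<and>
                    group_ub_covers G \<B> = metric_ub_covers (carrier G) d))"
proof -
  have "\<exists>\<C>. countable \<C> \<and> bornology_basis \<B> \<C>"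
    if "Metric_space (carrier G) d" "group_ub_covers G \<B> = metric_ub_covers (carrier G) d" for d
    using countable_basis_if_metric[OF assms that] .
  moreover have "\<exists>d. Metric_space (carrier G) d \<and> left_invariant G d \<and>
                    group_ub_covers G \<B> = metric_ub_covers (carrier G) d"
    if "countable \<C>" "bornology_basis \<B> \<C>" for \<C>
    using left_invariant_metric_if_countable_basis[OF assms that] .
  ultimately show ?thesis by meson
qed

end
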